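(* Let $\mathbb U=(\mathbb U_{lk})_{l,k=3}^{N_1-1}$ with $$\mathbb U_{lk}=\frac{1}{1+p_0}\int_0^{L}\tilde s\,\tilde\Theta_l'(\tilde s)\,\tilde\Theta_k(\tilde s)\,d\tilde s,$$ and let $\mathbb D=\mathrm{diag}(\beta_3^2,\beta_4^2,\dots,\beta_{N_1-1}^2)$. Then $\|\mathbb U^T\|_{\ell^2_*}\lesssim\|\mathbb D^{1/2}\|_{\ell^2_*}$, where $\|\cdot\|_{\ell^2_*}$ is the operator norm on $\ell^2$ and the implied constant is independent of $N_1$.
   Context: Fix $R_0>0$, an integer $N_1\ge4$ and $p_0>-1/2$; let $L=2\pi R_0(1+p_0)$. Let $\Theta_0=(2\pi R_0)^{-1/2}$ and, for $k\ge1$, $\Theta_{2k-1}(s)=(2\pi R_0)^{-1/2}\cos(ks/R_0)$, $\Theta_{2k}(s)=(2\pi R_0)^{-1/2}\sin(ks/R_0)$, with $\beta_0=0$, $\beta_{2k-1}=\beta_{2k}=k$. Define $\tilde\Theta_k(\tilde s)=\Theta_k(2\pi R_0\tilde s/L)$ for $\tilde s\in[0,L]$ (so $\int_0^L\tilde\Theta_j\tilde\Theta_k\,d\tilde s=(1+p_0)\delta_{jk}$), and primes denote $d/d\tilde s$. *)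

theory Defs
  imports "HOL-Analysis.Analysis"
begin

text \<open>Fourier modes on [0, 2 pi R0]: Theta_0 constant, Theta_(2k-1) cosine, Theta_(2k) sine.\<close>
definition beta :: "nat \<Rightarrow> nat" where
  "beta k = (k + 1) div 2"

definition Theta :: "real \<Rightarrow> nat \<Rightarrow> real \<Rightarrow> real" where
  "Theta R0 k s =
     (if k = 0 then 1 / sqrt (2 * pi * R0)
      else if odd k then cos (real (beta k) * s / R0) / sqrt (2 * pi * R0)
      else sin (real (beta k) * s / R0) / sqrt (2 * pi * R0))"

definition Lpar :: "real \<Rightarrow> real \<Rightarrow> real" where
  "Lpar R0 p0 = 2 * pi * R0 * (1 + p0)"

definition Theta_tilde :: "real \<Rightarrow> real \<Rightarrow> nat \<Rightarrow> real \<Rightarrow> real" where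
  "Theta_tilde R0 p0 k st = Theta R0 k (2 * pi * R0 * st / Lpar R0 p0)"

definition Umat :: "real \<Rightarrow> real \<Rightarrow> nat \<Rightarrow> nat \<Rightarrow> real" where
  "Umat R0 p0 l k = (1 / (1 + p0)) *
     integral {0 .. Lpar R0 p0}
       (\<lambda>st. st * deriv (Theta_tilde R0 p0 l) st * Theta_tilde R0 p0 k st)"

definition Dhalf :: "nat \<Rightarrow> nat \<Rightarrow> real" where
  "Dhalf l k = (if l = k then sqrt ((real (beta l))^2) else 0)"

definition mat_opnorm :: "nat set \<Rightarrow> (nat \<Rightarrow> nat \<Rightarrow> real) \<Rightarrow> real" where
  "mat_opnorm I A =
     Sup {L2_set (\<lambda>l. \<Sum>k\<in>I. A l k * x k) I | x. L2_set x I \<le> 1}"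

end

theory Submission
  imports Defs
begin

text \<open>
  For k > 0 the rescaled mode Theta_tilde k is a phase-shifted cosine of frequency
  beta k * 2 pi / L, and its derivative is beta k * 2 pi / L times the same cosine shifted by a
  further pi/2; both families are orthogonal on [0, L] with the common norm (1 + p0) / 2.
  Hence (U^T x)_l is, up to the factor 1 / (1 + p0), the l-th Fourier coefficient of s F(s),
  where F = sum_k x_k Theta_tilde_k'. Bessel's inequality, |s| <= L and Parseval's identity
  for F give |U^T x| <= pi |D^(1/2) x| <= pi beta (N1 - 1) |x|, and beta (N1 - 1) is a diagonal
  entry of D^(1/2), hence at most its operator norm.
\<close>

lemma integral_mult_sum:
  fixes g :: "real \<Rightarrow> real" and f :: "'a \<Rightarrow> real \<Rightarrow> real"
  assumes "finite I" and "\<And>k. k \<in> I \<Longrightarrow> continuous_on {a..b} (f k)"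
    and "continuous_on {a..b} g"
  shows "integral {a..b} (\<lambda>s. g s * (\<Sum>k\<in>I. c k * f k s)) =
         (\<Sum>k\<in>I. c k * integral {a..b} (\<lambda>s. g s * f k s))"
proof -
  have "integral {a..b} (\<lambda>s. g s * (\<Sum>k\<in>I. c k * f k s)) =
      integral {a..b} (\<lambda>s. \<Sum>k\<in>I. c k * (g s * f k s))"
    by (simp add: sum_distrib_left ac_simps)
  also have "\<dots> = (\<Sum>k\<in>I. integral {a..b} (\<lambda>s. c k * (g s * f k s)))"
    by (rule integral_sum[OF assms(1)])
      (auto intro!: integrable_continuous_interval continuous_intros assms(2,3))
  finally show ?thesis by simp
qed

lemma integral_orthogonal_sum_sq:
  fixes f :: "'a \<Rightarrow> real \<Rightarrow> real"
  assumes I: "finite I" and cont: "\<And>k. k \<in> I \<Longrightarrow> continuous_on {a..b} (f k)"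
    and orth: "\<And>j k. j \<in> I \<Longrightarrow> k \<in> I \<Longrightarrow>
                 integral {a..b} (\<lambda>s. f j s * f k s) = (if j = k then \<nu> k else 0)"
  shows "integral {a..b} (\<lambda>s. (\<Sum>k\<in>I. c k * f k s)\<^sup>2) = (\<Sum>k\<in>I. \<nu> k * (c k)\<^sup>2)"
proof -
  have cont_sum: "continuous_on {a..b} (\<lambda>s. \<Sum>k\<in>I. c k * f k s)"
    using cont by (auto intro!: continuous_intros)
  have inner: "(\<Sum>j\<in>I. c j * integral {a..b} (\<lambda>s. f k s * f j s)) = c k * \<nu> k" if "k \<in> I" for k
    using that I by (simp add: orth if_distrib cong: if_cong)
  have "integral {a..b} (\<lambda>s. (\<Sum>k\<in>I. c k * f k s)\<^sup>2) =
      (\<Sum>k\<in>I. c k * integral {a..b} (\<lambda>s. (\<Sum>j\<in>I. c j * f j s) * f k s))"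
    unfolding power2_eq_square by (rule integral_mult_sum[OF I cont cont_sum])
  also have "\<dots> = (\<Sum>k\<in>I. c k * (\<Sum>j\<in>I. c j * integral {a..b} (\<lambda>s. f k s * f j s)))"
  proof (intro sum.cong refl arg_cong[where f = "(*) (c _)"])
    fix k assume "k \<in> I"
    then show "integral {a..b} (\<lambda>s. (\<Sum>j\<in>I. c j * f j s) * f k s) =
        (\<Sum>j\<in>I. c j * integral {a..b} (\<lambda>s. f k s * f j s))"
      using integral_mult_sum[OF I cont cont] by (simp add: mult.commute)
  qed
  also have "\<dots> = (\<Sum>k\<in>I. \<nu> k * (c k)\<^sup>2)"
    by (simp add: inner power2_eq_square ac_simps)
  finally show ?thesis .
qed

lemma bessel_inequality_integral:
  fixes f :: "'a \<Rightarrow> real \<Rightarrow> real" and g :: "real \<Rightarrow> real"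
  assumes I: "finite I" and cont: "\<And>k. k \<in> I \<Longrightarrow> continuous_on {a..b} (f k)"
    and orth: "\<And>j k. j \<in> I \<Longrightarrow> k \<in> I \<Longrightarrow>
                 integral {a..b} (\<lambda>s. f j s * f k s) = (if j = k then \<nu> else 0)"
    and g_cont: "continuous_on {a..b} g" and \<nu>: "\<nu> > 0"
  shows "(\<Sum>l\<in>I. (integral {a..b} (\<lambda>s. g s * f l s))\<^sup>2) \<le> \<nu> * integral {a..b} (\<lambda>s. (g s)\<^sup>2)"
proof -
  define c where "c l = integral {a..b} (\<lambda>s. g s * f l s) / \<nu>" for l
  define h where "h s = (\<Sum>k\<in>I. c k * f k s)" for s
  have h_cont: "continuous_on {a..b} h" unfolding h_def using cont by (auto intro!: continuous_intros)
  have "integral {a..b} (\<lambda>s. g s * h s) = (\<Sum>k\<in>I. c k * integral {a..b} (\<lambda>s. g s * f k s))"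
    unfolding h_def by (rule integral_mult_sum[OF I cont g_cont])
  also have "\<dots> = \<nu> * (\<Sum>k\<in>I. (c k)\<^sup>2)"
    using \<nu> by (simp add: c_def sum_distrib_left power2_eq_square)
  finally have gh: "integral {a..b} (\<lambda>s. g s * h s) = \<nu> * (\<Sum>k\<in>I. (c k)\<^sup>2)" .
  have hh: "integral {a..b} (\<lambda>s. (h s)\<^sup>2) = \<nu> * (\<Sum>k\<in>I. (c k)\<^sup>2)"
    unfolding h_def sum_distrib_left by (rule integral_orthogonal_sum_sq[OF I cont orth])
  have int: "(\<lambda>s. (g s)\<^sup>2) integrable_on {a..b}" "(\<lambda>s. 2 * (g s * h s)) integrable_on {a..b}"
      "(\<lambda>s. (h s)\<^sup>2) integrable_on {a..b}"
    by (auto intro!: integrable_continuous_interval continuous_intros h_cont g_cont)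
  have "0 \<le> integral {a..b} (\<lambda>s. (g s - h s)\<^sup>2)"
    by (rule integral_nonneg) (auto intro!: integrable_continuous_interval continuous_intros h_cont g_cont)
  also have "\<dots> = integral {a..b} (\<lambda>s. (g s)\<^sup>2 - 2 * (g s * h s) + (h s)\<^sup>2)"
    by (simp add: power2_eq_square algebra_simps)
  also have "\<dots> = integral {a..b} (\<lambda>s. (g s)\<^sup>2) - 2 * integral {a..b} (\<lambda>s. g s * h s)
                    + integral {a..b} (\<lambda>s. (h s)\<^sup>2)"
    using int by (simp add: integral_add integral_diff integrable_diff)
  finally have "\<nu> * (\<Sum>k\<in>I. (c k)\<^sup>2) \<le> integral {a..b} (\<lambda>s. (g s)\<^sup>2)"
    unfolding gh hh by simp
  moreover have "\<nu> * (\<nu> * (\<Sum>k\<in>I. (c k)\<^sup>2)) = (\<Sum>l\<in>I. (integral {a..b} (\<lambda>s. g s * f l s))\<^sup>2)"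
    using \<nu> by (simp add: c_def sum_distrib_left power2_eq_square)
  ultimately show ?thesis
    using \<nu> by (metis mult_left_mono less_imp_le)
qed

lemma integral_id_mult_sq_le:
  fixes F :: "real \<Rightarrow> real"
  assumes "continuous_on {0..L} F"
  shows "integral {0..L} (\<lambda>s. (s * F s)\<^sup>2) \<le> L\<^sup>2 * integral {0..L} (\<lambda>s. (F s)\<^sup>2)"
proof -
  have "integral {0..L} (\<lambda>s. (s * F s)\<^sup>2) \<le> integral {0..L} (\<lambda>s. L\<^sup>2 * (F s)\<^sup>2)"
  proof (rule integral_le)
    fix s assume "s \<in> {0..L}"
    then have "s\<^sup>2 \<le> L\<^sup>2" by (auto intro!: power_mono)
    then show "(s * F s)\<^sup>2 \<le> L\<^sup>2 * (F s)\<^sup>2"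
      unfolding power_mult_distrib by (rule mult_right_mono) simp
  qed (auto intro!: integrable_continuous_interval continuous_intros assms)
  then show ?thesis by simp
qed

lemma has_integral_cos_harmonic:
  fixes L \<phi> :: real and m :: int
  assumes L: "L > 0"
  shows "((\<lambda>s. cos (of_int m * (2 * pi / L) * s - \<phi>)) has_integral
           (if m = 0 then L * cos \<phi> else 0)) {0..L}"
proof (cases "m = 0")
  case True
  then show ?thesis using has_integral_const_real[of "cos \<phi>" 0 L] L by simp
next
  case False
  define c where "c = of_int m * (2 * pi / L)"
  have c: "c \<noteq> 0" using False L by (simp add: c_def)
  have "((\<lambda>s. cos (c * s - \<phi>)) has_integral (sin (c * L - \<phi>) / c - sin (c * 0 - \<phi>) / c)) {0..L}"
    using L c by (intro fundamental_theorem_of_calculus)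
      (auto intro!: derivative_eq_intros simp flip: has_real_derivative_iff_has_vector_derivative)
  moreover have "c * L = 2 * pi * of_int m"
    using L by (simp add: c_def)
  ultimately show ?thesis using False by (simp add: c_def sin_diff)
qed

lemma has_integral_cos_mult_cos_harmonic:
  fixes L \<phi> \<psi> :: real and a b :: nat
  assumes L: "L > 0" and "a > 0" "b > 0"
  shows "((\<lambda>s. cos (real a * (2 * pi / L) * s - \<phi>) * cos (real b * (2 * pi / L) * s - \<psi>))
           has_integral (if a = b then L / 2 * cos (\<phi> - \<psi>) else 0)) {0..L}"
proof -
  define w where "w = 2 * pi / L"
  have product: "(\<lambda>s. cos (real a * w * s - \<phi>) * cos (real b * w * s - \<psi>)) = (\<lambda>s.
      (cos (of_int (int a - int b) * w * s - (\<phi> - \<psi>)) +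
       cos (of_int (int a + int b) * w * s - (\<phi> + \<psi>))) / 2)"
    by (simp add: cos_times_cos algebra_simps)
  have "((\<lambda>s. (cos (of_int (int a - int b) * w * s - (\<phi> - \<psi>)) +
       cos (of_int (int a + int b) * w * s - (\<phi> + \<psi>))) / 2) has_integral
       ((if a = b then L * cos (\<phi> - \<psi>) else 0) + 0) / 2) {0..L}"
    using has_integral_cos_harmonic[OF L, of "int a - int b" "\<phi> - \<psi>"]
      has_integral_cos_harmonic[OF L, of "int a + int b" "\<phi> + \<psi>"] assms
    by (intro has_integral_divide has_integral_add) (auto simp: w_def)
  moreover have "((if a = b then L * cos (\<phi> - \<psi>) else 0) + 0) / 2 =
      (if a = b then L / 2 * cos (\<phi> - \<psi>) else 0)"
    by simp
  ultimately show ?thesis unfolding w_def [symmetric] product by (simp only:)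
qed

definition mode_phase :: "nat \<Rightarrow> real" where
  "mode_phase k = (if odd k then 0 else pi / 2)"

definition fourier_mode :: "real \<Rightarrow> real \<Rightarrow> nat \<Rightarrow> real \<Rightarrow> real" where
  "fourier_mode w \<delta> k s = cos (real (beta k) * w * s - mode_phase k - \<delta>)"

lemma cos_mode_phase_diff:
  assumes "j > 0" "k > 0" "beta j = beta k"
  shows "cos (mode_phase j - mode_phase k) = (if j = k then 1 else 0)"
  using assms unfolding beta_def mode_phase_def by (auto elim!: oddE evenE)

lemma has_integral_fourier_mode_product:
  fixes L \<delta> :: real and j k :: nat
  assumes L: "L > 0" and j: "j > 0" and k: "k > 0"
  shows "((\<lambda>s. fourier_mode (2 * pi / L) \<delta> j s * fourier_mode (2 * pi / L) \<delta> k s)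
           has_integral (if j = k then L / 2 else 0)) {0..L}"
proof -
  have "beta j > 0" "beta k > 0" using j k by (auto simp: beta_def)
  from has_integral_cos_mult_cos_harmonic[OF L this,
      of "mode_phase j + \<delta>" "mode_phase k + \<delta>"]
  have "((\<lambda>s. fourier_mode (2 * pi / L) \<delta> j s * fourier_mode (2 * pi / L) \<delta> k s)
      has_integral (if beta j = beta k then L / 2 * cos (mode_phase j - mode_phase k) else 0)) {0..L}"
    by (simp only: fourier_mode_def diff_diff_eq add_diff_cancel_right)
  moreover have "(if beta j = beta k then L / 2 * cos (mode_phase j - mode_phase k) else 0) =
      (if j = k then L / 2 else 0)"
    using cos_mode_phase_diff[OF j k] by auto
  ultimately show ?thesis by (simp only:)
qed

lemma Theta_tilde_eq_fourier_mode:
  assumes "R0 \<noteq> 0" "k > 0"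
  shows "Theta_tilde R0 p0 k s = fourier_mode (2 * pi / Lpar R0 p0) 0 k s / sqrt (2 * pi * R0)"
  using assms
  by (simp add: Theta_tilde_def Theta_def fourier_mode_def mode_phase_def cos_diff field_simps)

lemma fourier_mode_has_derivative:
  "(fourier_mode w \<delta> k has_real_derivative
     real (beta k) * w * fourier_mode w (\<delta> - pi / 2) k s) (at s)"
  unfolding fourier_mode_def
  by (auto intro!: derivative_eq_intros simp: cos_diff sin_diff cos_add sin_add algebra_simps)

lemma deriv_Theta_tilde:
  assumes "R0 \<noteq> 0" "k > 0"
  shows "deriv (Theta_tilde R0 p0 k) s =
    real (beta k) * (2 * pi / Lpar R0 p0) * fourier_mode (2 * pi / Lpar R0 p0) (- pi / 2) k s
      / sqrt (2 * pi * R0)"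
proof -
  have "Theta_tilde R0 p0 k = (\<lambda>s. fourier_mode (2 * pi / Lpar R0 p0) 0 k s / sqrt (2 * pi * R0))"
    using Theta_tilde_eq_fourier_mode[OF assms] by blast
  then show ?thesis
    using DERIV_imp_deriv[OF DERIV_cdivide[OF fourier_mode_has_derivative]] by simp
qed

lemma continuous_on_fourier_mode: "continuous_on S (fourier_mode w \<delta> k)"
  unfolding fourier_mode_def by (intro continuous_intros)

lemma continuous_on_fourier_mode_divide:
  assumes "A \<noteq> 0"
  shows "continuous_on S (\<lambda>s. fourier_mode w \<delta> k s / A)"
  using assms by (intro continuous_on_divide continuous_on_fourier_mode continuous_on_const) simp

lemma continuous_on_Theta_tilde:
  assumes "R0 > 0" "k > 0"
  shows "continuous_on S (Theta_tilde R0 p0 k)"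
proof -
  have "Theta_tilde R0 p0 k = (\<lambda>s. fourier_mode (2 * pi / Lpar R0 p0) 0 k s / sqrt (2 * pi * R0))"
    using Theta_tilde_eq_fourier_mode[of R0 k p0] assms by auto
  then show ?thesis
    using assms by (simp add: continuous_on_fourier_mode_divide)
qed

lemma continuous_on_deriv_Theta_tilde:
  assumes "R0 > 0" "k > 0"
  shows "continuous_on S (deriv (Theta_tilde R0 p0 k))"
proof -
  have "deriv (Theta_tilde R0 p0 k) = (\<lambda>s. (real (beta k) * (2 * pi / Lpar R0 p0)) *
      (fourier_mode (2 * pi / Lpar R0 p0) (- pi / 2) k s / sqrt (2 * pi * R0)))"
    using deriv_Theta_tilde[of R0 k p0] assms by auto
  then show ?thesis
    using assms by (simp only:) (intro continuous_on_mult_left continuous_on_fourier_mode_divide, simp)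
qed

lemma integral_fourier_mode_product_divide:
  assumes "L > 0" "j > 0" "k > 0"
  shows "integral {0..L} (\<lambda>s. fourier_mode (2 * pi / L) \<delta> j s / A * (fourier_mode (2 * pi / L) \<delta> k s / A))
    = (if j = k then L / (2 * A\<^sup>2) else 0)"
  using integral_unique[OF has_integral_fourier_mode_product[OF assms, of \<delta>]]
  by (simp add: power2_eq_square)

lemma Theta_tilde_orthogonal:
  assumes R0: "R0 > 0" and p0: "p0 > -1" and "j > 0" "k > 0"
  shows "integral {0..Lpar R0 p0} (\<lambda>s. Theta_tilde R0 p0 j s * Theta_tilde R0 p0 k s) =
    (if j = k then (1 + p0) / 2 else 0)"
proof -
  have "Lpar R0 p0 > 0" using R0 p0 by (simp add: Lpar_def)
  then show ?thesis
    using R0 assms integral_fourier_mode_product_divide[of "Lpar R0 p0" j k 0 "sqrt (2 * pi * R0)"]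
    by (simp add: Theta_tilde_eq_fourier_mode Lpar_def)
qed

lemma deriv_Theta_tilde_orthogonal:
  assumes R0: "R0 > 0" and p0: "p0 > -1" and j: "j > 0" and k: "k > 0"
  shows "integral {0..Lpar R0 p0} (\<lambda>s. deriv (Theta_tilde R0 p0 j) s * deriv (Theta_tilde R0 p0 k) s) =
    (if j = k then (real (beta k) * (2 * pi / Lpar R0 p0))\<^sup>2 * ((1 + p0) / 2) else 0)"
proof -
  define L where "L = Lpar R0 p0"
  define A where "A = sqrt (2 * pi * R0)"
  have L: "L > 0" using R0 p0 by (simp add: L_def Lpar_def)
  have "(\<lambda>s. deriv (Theta_tilde R0 p0 j) s * deriv (Theta_tilde R0 p0 k) s) =
      (\<lambda>s. (real (beta j) * (2 * pi / L)) * (real (beta k) * (2 * pi / L)) *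
        (fourier_mode (2 * pi / L) (- pi / 2) j s / A * (fourier_mode (2 * pi / L) (- pi / 2) k s / A)))"
    using R0 j k by (simp add: deriv_Theta_tilde fun_eq_iff L_def A_def field_simps)
  then have "integral {0..L} (\<lambda>s. deriv (Theta_tilde R0 p0 j) s * deriv (Theta_tilde R0 p0 k) s) =
      (real (beta j) * (2 * pi / L)) * (real (beta k) * (2 * pi / L)) *
      (if j = k then L / (2 * A\<^sup>2) else 0)"
    by (simp only: integral_mult_right integral_fourier_mode_product_divide[OF L j k])
  moreover have "L / (2 * A\<^sup>2) = (1 + p0) / 2"
    using R0 by (simp add: L_def A_def Lpar_def)
  ultimately show ?thesis
    unfolding L_def [symmetric] by (simp only:) (simp add: power2_eq_square)
qed

lemma Umat_transpose_apply:
  assumes "R0 > 0" "finite I" "0 \<notin> I" "l > 0"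
  shows "(\<Sum>k\<in>I. Umat R0 p0 k l * x k) = integral {0..Lpar R0 p0}
    (\<lambda>s. s * (\<Sum>k\<in>I. x k * deriv (Theta_tilde R0 p0 k) s) * Theta_tilde R0 p0 l s) / (1 + p0)"
proof -
  have cont: "continuous_on {0..Lpar R0 p0} (deriv (Theta_tilde R0 p0 k))" if "k \<in> I" for k
    using assms that by (intro continuous_on_deriv_Theta_tilde) (auto intro: gr0I)
  have "(\<Sum>k\<in>I. Umat R0 p0 k l * x k) = (\<Sum>k\<in>I. x k * integral {0..Lpar R0 p0}
      (\<lambda>s. (s * Theta_tilde R0 p0 l s) * deriv (Theta_tilde R0 p0 k) s)) / (1 + p0)"
    by (simp add: Umat_def sum_divide_distrib ac_simps)
  also have "\<dots> = integral {0..Lpar R0 p0}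
      (\<lambda>s. (s * Theta_tilde R0 p0 l s) * (\<Sum>k\<in>I. x k * deriv (Theta_tilde R0 p0 k) s)) / (1 + p0)"
    using assms by (subst integral_mult_sum[OF \<open>finite I\<close> cont])
      (auto intro!: continuous_intros continuous_on_Theta_tilde)
  finally show ?thesis by (simp add: ac_simps)
qed

lemma mat_opnorm_le:
  fixes I :: "nat set"
  assumes "\<And>x. L2_set x I \<le> 1 \<Longrightarrow> L2_set (\<lambda>l. \<Sum>k\<in>I. A l k * x k) I \<le> B"
  shows "mat_opnorm I A \<le> B"
  unfolding mat_opnorm_def
proof (rule cSup_least)
  have "L2_set (\<lambda>_. 0) I \<le> 1" by (simp add: L2_set_def)
  then show "{L2_set (\<lambda>l. \<Sum>k\<in>I. A l k * x k) I |x. L2_set x I \<le> 1} \<noteq> {}" by blast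
qed (use assms in blast)

lemma bdd_above_mat_opnorm:
  fixes I :: "nat set"
  assumes I: "finite I"
  shows "bdd_above {L2_set (\<lambda>l. \<Sum>k\<in>I. A l k * x k) I |x. L2_set x I \<le> 1}"
proof (rule bdd_aboveI, safe)
  fix x :: "nat \<Rightarrow> real" assume x: "L2_set x I \<le> 1"
  have entry: "\<bar>A l k * x k\<bar> \<le> \<bar>A l k\<bar>" if "k \<in> I" for l k
  proof -
    have "\<bar>x k\<bar> \<le> L2_set x I"
      using member_le_L2_set[OF I that, of "\<lambda>k. \<bar>x k\<bar>"] by (simp add: L2_set_def)
    with x have "\<bar>x k\<bar> \<le> 1" by linarith
    then show ?thesis by (simp add: abs_mult mult_left_le)
  qed
  have "(\<Sum>k\<in>I. \<bar>A l k * x k\<bar>) \<le> (\<Sum>k\<in>I. \<bar>A l k\<bar>)" for l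
    by (rule sum_mono) (rule entry)
  then have "\<bar>\<Sum>k\<in>I. A l k * x k\<bar> \<le> (\<Sum>k\<in>I. \<bar>A l k\<bar>)" for l
    using sum_abs[of "\<lambda>k. A l k * x k" I] by (meson order_trans)
  then have "(\<Sum>l\<in>I. \<bar>\<Sum>k\<in>I. A l k * x k\<bar>) \<le> (\<Sum>l\<in>I. \<Sum>k\<in>I. \<bar>A l k\<bar>)"
    by (rule sum_mono)
  with L2_set_le_sum_abs
  show "L2_set (\<lambda>l. \<Sum>k\<in>I. A l k * x k) I \<le> (\<Sum>l\<in>I. \<Sum>k\<in>I. \<bar>A l k\<bar>)"
    by (rule order_trans)
qed

lemma abs_entry_le_mat_opnorm:
  assumes I: "finite I" and "l \<in> I" and k: "k \<in> I"
  shows "\<bar>A l k\<bar> \<le> mat_opnorm I A"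
proof -
  define e where "e j = (if j = k then 1 else 0 :: real)" for j
  have e_sq: "(\<lambda>j. (e j)\<^sup>2) = e" by (auto simp: e_def)
  have "L2_set e I = 1"
    unfolding L2_set_def e_sq using I k by (simp add: e_def)
  then have "L2_set (\<lambda>l. \<Sum>j\<in>I. A l j * e j) I \<le> mat_opnorm I A"
    unfolding mat_opnorm_def by (intro cSup_upper bdd_above_mat_opnorm I) auto
  moreover have "(\<lambda>l. \<Sum>j\<in>I. A l j * e j) = (\<lambda>l. A l k)"
    using I k by (simp add: e_def if_distrib cong: if_cong)
  ultimately have "L2_set (\<lambda>l. A l k) I \<le> mat_opnorm I A" by simp
  moreover have "\<bar>A l k\<bar> \<le> L2_set (\<lambda>l. A l k) I"
    using member_le_L2_set[OF I \<open>l \<in> I\<close>, of "\<lambda>l. \<bar>A l k\<bar>"] by (simp add: L2_set_def)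
  ultimately show ?thesis by linarith
qed

lemma L2_set_mult_le:
  assumes "\<And>k. k \<in> I \<Longrightarrow> \<bar>a k\<bar> \<le> M" and "0 \<le> M"
  shows "L2_set (\<lambda>k. a k * x k) I \<le> M * L2_set x I"
proof -
  have "L2_set (\<lambda>k. a k * x k) I = L2_set (\<lambda>k. \<bar>a k\<bar> * \<bar>x k\<bar>) I"
    by (simp add: L2_set_def power_mult_distrib)
  also have "\<dots> \<le> L2_set (\<lambda>k. M * \<bar>x k\<bar>) I"
    using assms(1) by (intro L2_set_mono mult_right_mono) auto
  also have "\<dots> = M * L2_set (\<lambda>k. \<bar>x k\<bar>) I"
    by (rule L2_set_right_distrib [OF assms(2), symmetric])
  also have "L2_set (\<lambda>k. \<bar>x k\<bar>) I = L2_set x I"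
    by (simp add: L2_set_def)
  finally show ?thesis .
qed

lemma L2_set_Umat_transpose_le:
  fixes R0 p0 :: real and I :: "nat set" and x :: "nat \<Rightarrow> real"
  assumes R0: "R0 > 0" and p0: "p0 > -1" and I: "finite I" "0 \<notin> I"
    \<comment> \<open>the constant mode Theta_0 has twice the norm of the others\<close>
  shows "L2_set (\<lambda>l. \<Sum>k\<in>I. Umat R0 p0 k l * x k) I \<le> pi * L2_set (\<lambda>k. real (beta k) * x k) I"
proof -
  define L where "L = Lpar R0 p0"
  define w where "w = 2 * pi / L"
  define \<nu> where "\<nu> = (1 + p0) / 2"
  define \<theta> where "\<theta> = Theta_tilde R0 p0"
  define \<theta>' where "\<theta>' k = deriv (\<theta> k)" for k
  define F where "F s = (\<Sum>k\<in>I. x k * \<theta>' k s)" for s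
  have \<nu>: "\<nu> > 0" using p0 by (simp add: \<nu>_def)
  have pos: "k > 0" if "k \<in> I" for k using that I(2) by (metis gr0I)
  have cont: "continuous_on {0..L} (\<theta> k)" if "k \<in> I" for k
    unfolding \<theta>_def using R0 pos[OF that] by (rule continuous_on_Theta_tilde)
  have cont': "continuous_on {0..L} (\<theta>' k)" if "k \<in> I" for k
    unfolding \<theta>'_def \<theta>_def using R0 pos[OF that] by (rule continuous_on_deriv_Theta_tilde)
  have F: "continuous_on {0..L} F"
    unfolding F_def using cont' by (intro continuous_on_sum continuous_on_mult_left) auto
  have orth: "integral {0..L} (\<lambda>s. \<theta> j s * \<theta> k s) = (if j = k then \<nu> else 0)"
    if "j \<in> I" "k \<in> I" for j k
    unfolding L_def \<theta>_def \<nu>_def using R0 p0 pos[OF that(1)] pos[OF that(2)] by (rule Theta_tilde_orthogonal)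
  have orth': "integral {0..L} (\<lambda>s. \<theta>' j s * \<theta>' k s) =
      (if j = k then (real (beta k) * w)\<^sup>2 * \<nu> else 0)" if "j \<in> I" "k \<in> I" for j k
    unfolding L_def w_def \<theta>'_def \<theta>_def \<nu>_def
    using R0 p0 pos[OF that(1)] pos[OF that(2)] by (rule deriv_Theta_tilde_orthogonal)
  have "(\<Sum>l\<in>I. (\<Sum>k\<in>I. Umat R0 p0 k l * x k)\<^sup>2) =
      (\<Sum>l\<in>I. (integral {0..L} (\<lambda>s. (s * F s) * \<theta> l s))\<^sup>2) / (1 + p0)\<^sup>2"
    using Umat_transpose_apply[OF R0 I pos]
    by (simp add: L_def F_def \<theta>'_def \<theta>_def power_divide sum_divide_distrib)
  also have "\<dots> \<le> \<nu> * integral {0..L} (\<lambda>s. (s * F s)\<^sup>2) / (1 + p0)\<^sup>2"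
    using F by (intro divide_right_mono bessel_inequality_integral[OF I(1) cont orth _ \<nu>])
      (auto intro!: continuous_intros)
  also have "\<dots> \<le> \<nu> * (L\<^sup>2 * integral {0..L} (\<lambda>s. (F s)\<^sup>2)) / (1 + p0)\<^sup>2"
    using \<nu> by (intro divide_right_mono mult_left_mono integral_id_mult_sq_le F) auto
  also have "integral {0..L} (\<lambda>s. (F s)\<^sup>2) = (\<Sum>k\<in>I. (real (beta k) * w)\<^sup>2 * \<nu> * (x k)\<^sup>2)"
    unfolding F_def by (rule integral_orthogonal_sum_sq[OF I(1) cont' orth'])
  also have "\<dots> = w\<^sup>2 * \<nu> * (\<Sum>k\<in>I. (real (beta k) * x k)\<^sup>2)"
    by (simp add: sum_distrib_left power_mult_distrib mult_ac)
  also have "\<nu> * (L\<^sup>2 * (w\<^sup>2 * \<nu> * (\<Sum>k\<in>I. (real (beta k) * x k)\<^sup>2))) / (1 + p0)\<^sup>2 =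
      (\<nu> * L * w / (1 + p0))\<^sup>2 * (\<Sum>k\<in>I. (real (beta k) * x k)\<^sup>2)"
    using p0 by (simp add: field_simps power2_eq_square)
  also have "\<nu> * L * w / (1 + p0) = pi"
    using R0 p0 by (simp add: \<nu>_def w_def L_def Lpar_def)
  finally show ?thesis
    unfolding L2_set_def by (intro real_le_lsqrt) (simp_all add: sum_nonneg power_mult_distrib)
qed

theorem lemma4p8:
  fixes R0 p0 :: real
  assumes "R0 > 0" and "p0 > -1/2"
  shows "\<exists>C>0. \<forall>N1::nat. N1 \<ge> 4 \<longrightarrow>
           mat_opnorm {3..N1-1} (\<lambda>l k. Umat R0 p0 k l)
             \<le> C * mat_opnorm {3..N1-1} Dhalf"
proof (intro exI[of _ pi] conjI allI impI pi_gt_zero)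
  fix N1 :: nat assume "N1 \<ge> 4"
  define I where "I = {3..N1 - 1}"
  define m where "m = N1 - 1"
  have I: "finite I" "0 \<notin> I" "m \<in> I" using \<open>N1 \<ge> 4\<close> by (auto simp: I_def m_def)
  have "mat_opnorm I (\<lambda>l k. Umat R0 p0 k l) \<le> pi * real (beta m)"
  proof (rule mat_opnorm_le)
    fix x :: "nat \<Rightarrow> real" assume "L2_set x I \<le> 1"
    have "L2_set (\<lambda>l. \<Sum>k\<in>I. Umat R0 p0 k l * x k) I \<le> pi * L2_set (\<lambda>k. real (beta k) * x k) I"
      by (rule L2_set_Umat_transpose_le) (use assms I in auto)
    also have "L2_set (\<lambda>k. real (beta k) * x k) I \<le> real (beta m) * L2_set x I"
      by (rule L2_set_mult_le) (auto simp: I_def m_def beta_def div_le_mono)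
    also have "\<dots> \<le> real (beta m)"
      using \<open>L2_set x I \<le> 1\<close> by (simp add: mult_left_le)
    finally show "L2_set (\<lambda>l. \<Sum>k\<in>I. Umat R0 p0 k l * x k) I \<le> pi * real (beta m)"
      by simp
  qed
  also have "real (beta m) \<le> mat_opnorm I Dhalf"
    using abs_entry_le_mat_opnorm[OF I(1) I(3) I(3), of Dhalf] by (simp add: Dhalf_def)
  finally show "mat_opnorm {3..N1-1} (\<lambda>l k. Umat R0 p0 k l) \<le> pi * mat_opnorm {3..N1-1} Dhalf"
    unfolding I_def by simp
qed

end
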